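(* Let $\vec p=(p_1,\dots,p_m)$ be independent p-values, where the true null p-values are $U[0,1]$ and each alternative (non-null) p-value has the same marginal probability density function $f$ on $[0,1]$, which is monotonically non-increasing and differentiable. Let $B^{(1)},B^{(2)}$ be two threshold FDR procedures, $B^{(i)}$ rejecting $R^{(i)}(\vec p)$ hypotheses and having false discovery rate $FDR^{(i)}$, $i=1,2$. Assume that $R^{(1)}(\vec p)\le R^{(2)}(\vec p)$ for all $\vec p$. Then $FDR^{(1)}\le FDR^{(2)}$.
   Context: A threshold FDR procedure computes a number $R(\vec p)\in\{0,\dots,m\}$ that depends only on the sorted p-values $p_{(1)}\le\dots\le p_{(m)}$, and rejects the hypotheses with the $R$ smallest p-values. For such a procedure, $V$ denotes the number of rejected true null hypotheses, $R^+=\max(R,1)$, and $FDR=E[V/R^+]$ (with $V/R^+=0$ when $R=0$). *)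

theory Defs
  imports "HOL-Probability.Probability"
begin

definition sorted_pvals :: "nat \<Rightarrow> (nat \<Rightarrow> real) \<Rightarrow> real list" where
  "sorted_pvals m p = sort (map p [0..<m])"

definition threshold_procedure :: "nat \<Rightarrow> ((nat \<Rightarrow> real) \<Rightarrow> nat) \<Rightarrow> bool" where
  "threshold_procedure m R \<longleftrightarrow>
     (\<forall>p. R p \<le> m) \<and>
     (\<forall>p q. sorted_pvals m p = sorted_pvals m q \<longrightarrow> R p = R q)"

text \<open>Hypotheses rejected: those with the R smallest p-values, i.e. p_i <= p_(R).\<close>
definition rejected :: "nat \<Rightarrow> ((nat \<Rightarrow> real) \<Rightarrow> nat) \<Rightarrow> (nat \<Rightarrow> real) \<Rightarrow> nat set" where
  "rejected m R p = {i. i < m \<and> 0 < R p \<and> p i \<le> sorted_pvals m p ! (R p - 1)}"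

text \<open>V = number of rejected true nulls (N = set of true null indices).\<close>
definition num_false_rej :: "nat \<Rightarrow> nat set \<Rightarrow> ((nat \<Rightarrow> real) \<Rightarrow> nat) \<Rightarrow> (nat \<Rightarrow> real) \<Rightarrow> nat" where
  "num_false_rej m N R p = card (rejected m R p \<inter> N)"

definition FDP :: "nat \<Rightarrow> nat set \<Rightarrow> ((nat \<Rightarrow> real) \<Rightarrow> nat) \<Rightarrow> (nat \<Rightarrow> real) \<Rightarrow> real" where
  "FDP m N R p = real (num_false_rej m N R p) / real (max (R p) 1)"

definition pval_law :: "nat set \<Rightarrow> (real \<Rightarrow> real) \<Rightarrow> nat \<Rightarrow> real measure" where
  "pval_law N f i =
     (if i \<in> N then density lborel (\<lambda>x. indicator {0..1} x)
      else density lborel (\<lambda>x. ennreal (f x) * indicator {0..1} x))"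

definition pvals_law :: "nat \<Rightarrow> nat set \<Rightarrow> (real \<Rightarrow> real) \<Rightarrow> (nat \<Rightarrow> real) measure" where
  "pvals_law m N f = (\<Pi>\<^sub>M i\<in>{..<m}. pval_law N f i)"

definition FDR :: "nat \<Rightarrow> nat set \<Rightarrow> (real \<Rightarrow> real) \<Rightarrow> ((nat \<Rightarrow> real) \<Rightarrow> nat) \<Rightarrow> real" where
  "FDR m N f R = (\<integral>p. FDP m N R p \<partial>pvals_law m N f)"

end

theory Submission
  imports Defs "HOL-Combinatorics.Permutations"
begin

text \<open>
  Relative to the uniform product measure the p-values have density
  \<open>\<Prod>i\<notin>N. f (p i)\<close>, and this reference measure is invariant under relabelling the
  hypotheses. Hence the FDR is the uniform expectation of the likelihood-weighted FDP averaged
  over all \<open>m!\<close> relabellings. Fix distinct p-values; a relabelling only decides which ranks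
  the null hypotheses occupy. If \<open>q k\<close> is the total weight of the relabellings putting a null
  at rank \<open>k\<close>, the averaged FDP of a procedure rejecting \<open>r\<close> hypotheses is
  \<open>(\<Sum>k<r. q k) / r\<close>. Swapping ranks \<open>k\<close> and \<open>k + 1\<close> moves a non-null to a smaller
  p-value, where the non-increasing density \<open>f\<close> is larger, so \<open>q k \<le> q (k + 1)\<close>; a prefix
  mean of a non-decreasing sequence is non-decreasing in \<open>r\<close>. So \<open>R\<^sub>1 \<le> R\<^sub>2\<close> gives
  the inequality pointwise after symmetrization, and integration finishes the proof.
\<close>

section \<open>Rank weights of permutations\<close>

lemma prefix_mean_mono:
  fixes q :: "nat \<Rightarrow> real"
  assumes q_mono: "\<And>k l. k \<le> l \<Longrightarrow> l < m \<Longrightarrow> q k \<le> q l"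
    and "1 \<le> r" "r \<le> r'" "r' \<le> m"
  shows "(\<Sum>k<r. q k) / r \<le> (\<Sum>k<r'. q k) / r'"
  using \<open>r \<le> r'\<close> \<open>r' \<le> m\<close>
proof (induction r' rule: dec_induct)
  case (step s)
  have "(\<Sum>k<s. q k) \<le> (\<Sum>k<s. q s)"
    using step.prems q_mono by (intro sum_mono) auto
  then have "(\<Sum>k<s. q k) / s \<le> (\<Sum>k<Suc s. q k) / Suc s"
    using step.hyps \<open>1 \<le> r\<close> by (simp add: field_simps)
  with step show ?case by simp
qed simp

definition null_rank_weight :: "nat \<Rightarrow> nat set \<Rightarrow> (nat \<Rightarrow> real) \<Rightarrow> nat \<Rightarrow> real" where
  "null_rank_weight m N g k =
     (\<Sum>\<tau> | \<tau> permutes {..<m}. if k \<in> \<tau> ` N then \<Prod>i\<in>{..<m} - N. g (\<tau> i) else 0)"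

lemma null_rank_weight_le_Suc:
  assumes g_nonneg: "\<And>k. k < m \<Longrightarrow> 0 \<le> g k"
    and g_antimono: "\<And>k l. k \<le> l \<Longrightarrow> l < m \<Longrightarrow> g l \<le> g k"
    and "Suc k < m"
  shows "null_rank_weight m N g k \<le> null_rank_weight m N g (Suc k)"
proof -
  let ?t = "Transposition.transpose k (Suc k)"
  let ?w = "\<lambda>\<tau>. \<Prod>i\<in>{..<m} - N. g (\<tau> i)"
  have t: "?t permutes {..<m}"
    using \<open>Suc k < m\<close> by (intro permutes_swap_id) auto
  have "null_rank_weight m N g (Suc k)
      = (\<Sum>\<tau> | \<tau> permutes {..<m}. if Suc k \<in> (?t \<circ> \<tau>) ` N then ?w (?t \<circ> \<tau>) else 0)"
    unfolding null_rank_weight_def by (rule setum_permutations_compose_left[OF t])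
  also have "\<dots> = (\<Sum>\<tau> | \<tau> permutes {..<m}. if k \<in> \<tau> ` N then ?w (?t \<circ> \<tau>) else 0)"
    by (intro sum.cong) (auto simp: Transposition.transpose_def image_iff)
  finally have swap: "null_rank_weight m N g (Suc k) = \<dots>" .
  show ?thesis
    unfolding swap unfolding null_rank_weight_def
  proof (intro sum_mono)
    fix \<tau> assume "\<tau> \<in> {\<tau>. \<tau> permutes {..<m}}"
    then have \<tau>: "\<tau> permutes {..<m}" by simp
    have "?w \<tau> \<le> ?w (?t \<circ> \<tau>)" if "k \<in> \<tau> ` N"
    proof (intro prod_mono conjI)
      fix i assume i: "i \<in> {..<m} - N"
      then have "\<tau> i < m" using permutes_in_image[OF \<tau>] by auto
      then show "0 \<le> g (\<tau> i)" using g_nonneg by blast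
      \<comment> \<open>the null hypothesis sits at rank k, so no non-null one does\<close>
      have "\<tau> i \<noteq> k"
        using that i permutes_inj[OF \<tau>] by (auto dest: injD)
      then show "g (\<tau> i) \<le> g ((?t \<circ> \<tau>) i)"
        using g_antimono \<open>Suc k < m\<close> by (auto simp: Transposition.transpose_def)
    qed
    then show "(if k \<in> \<tau> ` N then ?w \<tau> else 0) \<le> (if k \<in> \<tau> ` N then ?w (?t \<circ> \<tau>) else 0)"
      by simp
  qed
qed

lemma null_rank_weight_mono:
  assumes g_nonneg: "\<And>k. k < m \<Longrightarrow> 0 \<le> g k"
    and g_antimono: "\<And>k l. k \<le> l \<Longrightarrow> l < m \<Longrightarrow> g l \<le> g k"
    and "k \<le> l" "l < m"
  shows "null_rank_weight m N g k \<le> null_rank_weight m N g l"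
  using \<open>k \<le> l\<close> \<open>l < m\<close>
proof (induction l rule: dec_induct)
  case (step n)
  have "null_rank_weight m N g n \<le> null_rank_weight m N g (Suc n)"
    using g_nonneg g_antimono step.prems by (rule null_rank_weight_le_Suc)
  with step.IH step.prems show ?case by simp
qed simp

lemma sum_permutes_card_null_ranks:
  "(\<Sum>\<tau> | \<tau> permutes {..<m}. real (card {i\<in>N. \<tau> i < r}) * (\<Prod>i\<in>{..<m} - N. g (\<tau> i)))
       = (\<Sum>k<r. null_rank_weight m N g k)"
proof -
  have "real (card {i\<in>N. \<tau> i < r}) = (\<Sum>k<r. if k \<in> \<tau> ` N then 1 else 0)" if "inj \<tau>" for \<tau>
  proof -
    have "card {i\<in>N. \<tau> i < r} = card (\<tau> ` {i\<in>N. \<tau> i < r})"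
      using that by (simp add: card_image inj_on_subset)
    also have "\<tau> ` {i\<in>N. \<tau> i < r} = {..<r} \<inter> \<tau> ` N" by auto
    finally show ?thesis by (simp add: sum.If_cases)
  qed
  then have "(\<Sum>\<tau> | \<tau> permutes {..<m}. real (card {i\<in>N. \<tau> i < r}) * (\<Prod>i\<in>{..<m} - N. g (\<tau> i)))
      = (\<Sum>\<tau> | \<tau> permutes {..<m}. \<Sum>k<r. if k \<in> \<tau> ` N then \<Prod>i\<in>{..<m} - N. g (\<tau> i) else 0)"
    by (intro sum.cong) (auto simp: sum_distrib_right permutes_inj intro!: sum.cong)
  also have "\<dots> = (\<Sum>k<r. null_rank_weight m N g k)"
    unfolding null_rank_weight_def by (rule sum.swap)
  finally show ?thesis .
qed

lemma sum_permutes_null_fraction_mono: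
  fixes r r' :: nat
  assumes g_nonneg: "\<And>k. k < m \<Longrightarrow> 0 \<le> g k"
    and g_antimono: "\<And>k l. k \<le> l \<Longrightarrow> l < m \<Longrightarrow> g l \<le> g k"
    and "r \<le> r'" "r' \<le> m"
  shows "(\<Sum>\<tau> | \<tau> permutes {..<m}. (\<Prod>i\<in>{..<m} - N. g (\<tau> i)) * (card {i\<in>N. \<tau> i < r} / real (max r 1)))
       \<le> (\<Sum>\<tau> | \<tau> permutes {..<m}. (\<Prod>i\<in>{..<m} - N. g (\<tau> i)) * (card {i\<in>N. \<tau> i < r'} / real (max r' 1)))"
    (is "?S r \<le> ?S r'")
proof (cases "r = 0")
  case True
  have "0 \<le> (\<Prod>i\<in>{..<m} - N. g (\<tau> i))" if "\<tau> permutes {..<m}" for \<tau>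
    using g_nonneg permutes_in_image[OF that] by (intro prod_nonneg) auto
  then have "0 \<le> ?S r'" by (intro sum_nonneg) auto
  moreover have "?S 0 = 0" by simp
  ultimately show ?thesis using True by simp
next
  case False
  have S: "?S s = (\<Sum>k<s. null_rank_weight m N g k) / s" if "1 \<le> s" for s :: nat
  proof -
    have "?S s = (\<Sum>\<tau> | \<tau> permutes {..<m}.
        real (card {i\<in>N. \<tau> i < s}) * (\<Prod>i\<in>{..<m} - N. g (\<tau> i))) / s"
      using that by (simp add: sum_divide_distrib max_def mult.commute)
    then show ?thesis by (simp add: sum_permutes_card_null_ranks)
  qed
  have "(\<Sum>k<r. null_rank_weight m N g k) / r \<le> (\<Sum>k<r'. null_rank_weight m N g k) / r'"
    using False assms by (intro prefix_mean_mono null_rank_weight_mono) auto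
  moreover have "1 \<le> r" "1 \<le> r'" using False \<open>r \<le> r'\<close> by auto
  ultimately show ?thesis by (simp only: S)
qed

section \<open>Ranks of p-values\<close>

lemma sorted_nth_ge_iff_card_less:
  fixes xs :: "'a::linorder list"
  assumes xs: "sorted xs" and k: "k < length xs"
  shows "y \<le> xs ! k \<longleftrightarrow> card {j. j < length xs \<and> xs ! j < y} \<le> k"
proof
  assume "y \<le> xs ! k"
  have "j < k" if "j < length xs" "xs ! j < y" for j
  proof (rule ccontr)
    assume "\<not> j < k"
    then have "xs ! k \<le> xs ! j" using sorted_nth_mono[OF xs] that by simp
    with that \<open>y \<le> xs ! k\<close> show False by simp
  qed
  then have "{j. j < length xs \<and> xs ! j < y} \<subseteq> {..<k}" by auto
  then show "card {j. j < length xs \<and> xs ! j < y} \<le> k"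
    using card_mono[of "{..<k}"] by fastforce
next
  assume card_le: "card {j. j < length xs \<and> xs ! j < y} \<le> k"
  show "y \<le> xs ! k"
  proof (rule ccontr)
    assume "\<not> y \<le> xs ! k"
    then have "{..k} \<subseteq> {j. j < length xs \<and> xs ! j < y}"
      using sorted_nth_mono[OF xs _ k] k by fastforce
    then have "card {..k} \<le> card {j. j < length xs \<and> xs ! j < y}"
      by (intro card_mono) auto
    with card_le show False by simp
  qed
qed

lemma le_sorted_pvals_nth_iff:
  assumes "0 < r" "r \<le> m"
  shows "y \<le> sorted_pvals m p ! (r - 1) \<longleftrightarrow> card {j. j < m \<and> p j < y} < r"
proof -
  let ?xs = "sorted_pvals m p"
  have "card {j. j < length ?xs \<and> ?xs ! j < y} = length (filter (\<lambda>x. x < y) ?xs)"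
    by (simp add: length_filter_conv_card)
  also have "\<dots> = length (filter (\<lambda>x. x < y) (map p [0..<m]))"
    by (simp add: sorted_pvals_def filter_sort)
  also have "\<dots> = card {j. j < m \<and> p j < y}"
    by (simp add: length_filter_conv_card) (rule arg_cong[where f = card], auto)
  finally have card_eq: "card {j. j < length ?xs \<and> ?xs ! j < y} = card {j. j < m \<and> p j < y}" .
  have "y \<le> ?xs ! (r - 1) \<longleftrightarrow> card {j. j < length ?xs \<and> ?xs ! j < y} \<le> r - 1"
    using assms by (intro sorted_nth_ge_iff_card_less) (simp_all add: sorted_pvals_def)
  with assms show ?thesis
    unfolding card_eq by linarith
qed

lemma sorted_pvals_permute:
  assumes "\<sigma> permutes {..<m}"
  shows "sorted_pvals m (p \<circ> \<sigma>) = sorted_pvals m p"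
proof -
  have "mset (map (p \<circ> \<sigma>) [0..<m]) = mset (map p [0..<m])"
    using permutes_implies_image_mset_eq[OF assms, of "p \<circ> \<sigma>" p]
    by (simp add: mset_upt atLeast0LessThan)
  then show ?thesis
    unfolding sorted_pvals_def by (intro properties_for_sort) simp_all
qed

lemma threshold_procedure_permute:
  assumes "threshold_procedure m R" "\<sigma> permutes {..<m}"
  shows "R (p \<circ> \<sigma>) = R p"
  using assms(1) sorted_pvals_permute[OF assms(2)] unfolding threshold_procedure_def by blast

definition pval_rank :: "nat \<Rightarrow> (nat \<Rightarrow> real) \<Rightarrow> nat \<Rightarrow> nat" where
  "pval_rank m p i = card {j. j < m \<and> p j < p i}"

lemma pval_rank_less: "i < m \<Longrightarrow> pval_rank m p i < m"
proof -
  assume "i < m"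
  then have "{j. j < m \<and> p j < p i} \<subseteq> {..<m} - {i}" by auto
  then have "pval_rank m p i \<le> card ({..<m} - {i})"
    unfolding pval_rank_def by (intro card_mono) auto
  with \<open>i < m\<close> show ?thesis by simp
qed

lemma pval_rank_strict_mono:
  "a < m \<Longrightarrow> p a < p b \<Longrightarrow> pval_rank m p a < pval_rank m p b"
  unfolding pval_rank_def by (intro psubset_card_mono) auto

lemma pval_rank_le_imp_le:
  "a < m \<Longrightarrow> b < m \<Longrightarrow> pval_rank m p a \<le> pval_rank m p b \<Longrightarrow> p a \<le> p b"
  using pval_rank_strict_mono[of b m p a] by fastforce

lemma pval_rank_permute:
  assumes \<sigma>: "\<sigma> permutes {..<m}" and "i < m"
  shows "pval_rank m (p \<circ> \<sigma>) i = pval_rank m p (\<sigma> i)"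
proof -
  have "{j. j < m \<and> p (\<sigma> j) < p (\<sigma> i)} = {j\<in>{..<m}. p (\<sigma> j) < p (\<sigma> i)}" by auto
  then have "pval_rank m (p \<circ> \<sigma>) i = card (\<sigma> ` {j\<in>{..<m}. p (\<sigma> j) < p (\<sigma> i)})"
    using permutes_inj_on[OF \<sigma>] by (simp add: pval_rank_def card_image inj_on_subset)
  also have "\<sigma> ` {j\<in>{..<m}. p (\<sigma> j) < p (\<sigma> i)} = {k\<in>\<sigma> ` {..<m}. p k < p (\<sigma> i)}" by auto
  finally show ?thesis by (simp add: permutes_image[OF \<sigma>] pval_rank_def Collect_conj_eq Int_commute)
qed

definition pval_rank_perm :: "nat \<Rightarrow> (nat \<Rightarrow> real) \<Rightarrow> nat \<Rightarrow> nat" where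
  "pval_rank_perm m p k = (if k < m then pval_rank m p k else k)"

lemma pval_rank_perm_permutes:
  assumes p: "inj_on p {..<m}"
  shows "pval_rank_perm m p permutes {..<m}"
proof (rule bij_imp_permutes)
  have inj: "inj_on (pval_rank_perm m p) {..<m}"
  proof (rule inj_onI)
    fix a b assume ab: "a \<in> {..<m}" "b \<in> {..<m}" "pval_rank_perm m p a = pval_rank_perm m p b"
    then have "p a = p b"
      using pval_rank_le_imp_le[of a m b p] pval_rank_le_imp_le[of b m a p] by (auto simp: pval_rank_perm_def)
    with p ab show "a = b" by (auto dest: inj_onD)
  qed
  moreover have "pval_rank_perm m p ` {..<m} = {..<m}"
  proof (rule card_subset_eq)
    show "pval_rank_perm m p ` {..<m} \<subseteq> {..<m}"
      using pval_rank_less by (auto simp: pval_rank_perm_def)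
    show "card (pval_rank_perm m p ` {..<m}) = card {..<m}"
      using inj by (rule card_image)
  qed simp
  ultimately show "bij_betw (pval_rank_perm m p) {..<m} {..<m}"
    unfolding bij_betw_def ..
qed (simp add: pval_rank_perm_def)

lemma rejected_eq_pval_rank:
  assumes "R p \<le> m"
  shows "rejected m R p = {i. i < m \<and> pval_rank m p i < R p}"
  using le_sorted_pvals_nth_iff[of "R p" m _ p] assms by (auto simp: rejected_def pval_rank_def)

lemma FDP_eq_pval_rank:
  assumes "threshold_procedure m R" "N \<subseteq> {..<m}"
  shows "FDP m N R p = card {i\<in>N. pval_rank m p i < R p} / real (max (R p) 1)"
proof -
  have "R p \<le> m" using assms(1) unfolding threshold_procedure_def by blast
  then have "rejected m R p \<inter> N = {i\<in>N. pval_rank m p i < R p}"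
    unfolding rejected_eq_pval_rank[where R = R and p = p, OF \<open>R p \<le> m\<close>] using assms(2) by auto
  then show ?thesis unfolding FDP_def num_false_rej_def by simp
qed

lemma sum_permutes_pval_null_fraction_mono:
  assumes N: "N \<subseteq> {..<m}" and p: "inj_on p {..<m}"
    and h_nonneg: "\<And>i. i < m \<Longrightarrow> 0 \<le> h (p i)"
    and h_antimono: "\<And>i j. i < m \<Longrightarrow> j < m \<Longrightarrow> p i \<le> p j \<Longrightarrow> h (p j) \<le> h (p i)"
    and "r \<le> r'" "r' \<le> m"
  shows "(\<Sum>\<sigma> | \<sigma> permutes {..<m}. (\<Prod>i\<in>{..<m} - N. h (p (\<sigma> i))) *
            (card {i\<in>N. pval_rank m (p \<circ> \<sigma>) i < r} / real (max r 1)))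
       \<le> (\<Sum>\<sigma> | \<sigma> permutes {..<m}. (\<Prod>i\<in>{..<m} - N. h (p (\<sigma> i))) *
            (card {i\<in>N. pval_rank m (p \<circ> \<sigma>) i < r'} / real (max r' 1)))"
proof -
  let ?c = "pval_rank_perm m p"
  have c: "?c permutes {..<m}"
    using p by (rule pval_rank_perm_permutes)
  define g where "g k = h (p (inv ?c k))" for k
  have inv_c: "inv ?c k < m" "pval_rank m p (inv ?c k) = k" if "k < m" for k
    using that permutes_in_image[OF permutes_inv[OF c]] permutes_inverses(1)[OF c, of k]
    by (auto simp: pval_rank_perm_def)
  have g_nonneg: "0 \<le> g k" if "k < m" for k
    using that inv_c h_nonneg by (simp add: g_def)
  have g_antimono: "g l \<le> g k" if "k \<le> l" "l < m" for k l
  proof -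
    have "p (inv ?c k) \<le> p (inv ?c l)"
      using that inv_c[of k] inv_c[of l] by (intro pval_rank_le_imp_le) auto
    then show ?thesis
      using that inv_c unfolding g_def by (intro h_antimono) auto
  qed
  \<comment> \<open>relabel each permutation by the ranks of the p-values\<close>
  have "(\<Sum>\<sigma> | \<sigma> permutes {..<m}. (\<Prod>i\<in>{..<m} - N. h (p (\<sigma> i))) *
            (card {i\<in>N. pval_rank m (p \<circ> \<sigma>) i < s} / real (max s 1)))
       = (\<Sum>\<sigma> | \<sigma> permutes {..<m}. (\<Prod>i\<in>{..<m} - N. g ((?c \<circ> \<sigma>) i)) *
            (card {i\<in>N. (?c \<circ> \<sigma>) i < s} / real (max s 1)))" for s
  proof (intro sum.cong refl)
    fix \<sigma> assume "\<sigma> \<in> {\<sigma>. \<sigma> permutes {..<m}}"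
    then have \<sigma>: "\<sigma> permutes {..<m}" by simp
    have "pval_rank m (p \<circ> \<sigma>) i = ?c (\<sigma> i)" if "i \<in> N" for i
      using that N permutes_in_image[OF \<sigma>] by (auto simp: pval_rank_perm_def pval_rank_permute[OF \<sigma>])
    then show "(\<Prod>i\<in>{..<m} - N. h (p (\<sigma> i))) * (card {i\<in>N. pval_rank m (p \<circ> \<sigma>) i < s} / real (max s 1))
        = (\<Prod>i\<in>{..<m} - N. g ((?c \<circ> \<sigma>) i)) * (card {i\<in>N. (?c \<circ> \<sigma>) i < s} / real (max s 1))"
      using permutes_inverses(2)[OF c] by (simp add: g_def cong: conj_cong)
  qed
  also have "\<dots> s = (\<Sum>\<tau> | \<tau> permutes {..<m}. (\<Prod>i\<in>{..<m} - N. g (\<tau> i)) *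
            (card {i\<in>N. \<tau> i < s} / real (max s 1)))" for s
    by (rule setum_permutations_compose_left[OF c, symmetric])
  finally show ?thesis
    using sum_permutes_null_fraction_mono[OF g_nonneg g_antimono assms(5,6)] by simp
qed

section \<open>Product measures\<close>

lemma indicator_PiE_eq_prod:
  assumes "p \<in> extensional I" "finite I"
  shows "indicator (PiE I A) p = (\<Prod>i\<in>I. indicator (A i) (p i) :: 'b::comm_semiring_1)"
proof (cases "\<forall>i\<in>I. p i \<in> A i")
  case False
  then obtain i where i: "i \<in> I" "p i \<notin> A i" by blast
  then have "(\<Prod>i\<in>I. indicator (A i) (p i) :: 'b) = 0"
    using assms(2) by (intro prod_zero bexI[of _ i]) auto
  moreover have "p \<notin> PiE I A" using i by (auto simp: PiE_iff)
  ultimately show ?thesis by simp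
qed (use assms in \<open>auto simp: PiE_iff\<close>)

lemma PiM_density:
  fixes G :: "'i \<Rightarrow> 'a \<Rightarrow> ennreal"
  assumes I: "finite I" and M: "prob_space M"
    and P: "\<And>i. prob_space (density M (G i))"
    and Gm: "\<And>i. G i \<in> borel_measurable M"
  shows "PiM I (\<lambda>i. density M (G i)) = density (PiM I (\<lambda>_. M)) (\<lambda>p. \<Prod>i\<in>I. G i (p i))"
proof -
  interpret L: product_sigma_finite "\<lambda>i. density M (G i)"
    by (intro product_sigma_finite.intro prob_space_imp_sigma_finite P)
  interpret U: product_sigma_finite "\<lambda>_. M"
    by (intro product_sigma_finite.intro prob_space_imp_sigma_finite M)
  note Gm[measurable]
  have Wm: "(\<lambda>p. \<Prod>i\<in>I. G i (p i)) \<in> borel_measurable (PiM I (\<lambda>_. M))"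
    by measurable
  show ?thesis
  proof (rule L.PiM_eqI[symmetric, OF I])
    show "sets (density (PiM I (\<lambda>_. M)) (\<lambda>p. \<Prod>i\<in>I. G i (p i))) = sets (PiM I (\<lambda>i. density M (G i)))"
      unfolding sets_density by (intro sets_PiM_cong) simp_all
  next
    fix A assume A: "\<And>i. i \<in> I \<Longrightarrow> A i \<in> sets (density M (G i))"
    have Am: "A i \<in> sets M" if "i \<in> I" for i using A[OF that] by simp
    have "emeasure (density (PiM I (\<lambda>_. M)) (\<lambda>p. \<Prod>i\<in>I. G i (p i))) (PiE I A)
        = (\<integral>\<^sup>+ p. (\<Prod>i\<in>I. G i (p i)) * indicator (PiE I A) p \<partial>PiM I (\<lambda>_. M))"
      using Am I Wm by (intro emeasure_density) (auto intro!: sets_PiM_I_finite)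
    also have "\<dots> = (\<integral>\<^sup>+ p. (\<Prod>i\<in>I. G i (p i) * indicator (A i) (p i)) \<partial>PiM I (\<lambda>_. M))"
      by (intro nn_integral_cong)
        (auto simp: indicator_PiE_eq_prod[OF _ I] prod.distrib space_PiM PiE_iff)
    also have "\<dots> = (\<Prod>i\<in>I. \<integral>\<^sup>+ x. G i x * indicator (A i) x \<partial>M)"
      using Am Gm by (intro U.product_nn_integral_prod[OF I]) auto
    also have "\<dots> = (\<Prod>i\<in>I. emeasure (density M (G i)) (A i))"
      using Am Gm by (intro prod.cong refl emeasure_density[symmetric]) auto
    finally show "emeasure (density (PiM I (\<lambda>_. M)) (\<lambda>p. \<Prod>i\<in>I. G i (p i))) (PiE I A) =
        (\<Prod>i\<in>I. emeasure (density M (G i)) (A i))" .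
  qed
qed

lemma AE_PiM_component_neq:
  fixes M :: "real measure"
  assumes M: "prob_space M" and sp: "space M = UNIV" and sM: "sets M = sets borel"
    and single: "\<And>a. emeasure M {a} = 0"
    and I: "finite I" "i \<in> I" "j \<in> I" "i \<noteq> j"
  shows "AE p in PiM I (\<lambda>_. M). p i \<noteq> p j"
proof -
  interpret U: product_sigma_finite "\<lambda>_. M"
    by (intro product_sigma_finite.intro prob_space_imp_sigma_finite M)
  let ?P = "PiM I (\<lambda>_. M)"
  let ?E = "{p\<in>space ?P. p i = p j}"
  have mi[measurable]: "(\<lambda>p. p i) \<in> borel_measurable ?P"
    using I(2) measurable_component_singleton[of i I "\<lambda>_. M"] measurable_cong_sets[OF refl sM] by blast
  have mj[measurable]: "(\<lambda>p. p j) \<in> borel_measurable ?P"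
    using I(3) measurable_component_singleton[of j I "\<lambda>_. M"] measurable_cong_sets[OF refl sM] by blast
  have Es: "?E \<in> sets ?P" by measurable
  have Ii: "I = insert i (I - {i})" using I by auto
  have "emeasure ?P ?E = (\<integral>\<^sup>+ p. indicator ?E p \<partial>?P)"
    using Es by simp
  also have "\<dots> = (\<integral>\<^sup>+ p. indicator ?E p \<partial>PiM (insert i (I - {i})) (\<lambda>_. M))"
    using Ii by simp
  also have "\<dots> = (\<integral>\<^sup>+ x. (\<integral>\<^sup>+ y. indicator ?E (x(i := y)) \<partial>M) \<partial>PiM (I - {i}) (\<lambda>_. M))"
    by (rule U.product_nn_integral_insert) (use I Es Ii in \<open>auto\<close>)
  also have "\<dots> = (\<integral>\<^sup>+ x. 0 \<partial>PiM (I - {i}) (\<lambda>_. M))"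
  proof (rule nn_integral_cong)
    fix x assume x: "x \<in> space (PiM (I - {i}) (\<lambda>_. M))"
    have "(\<integral>\<^sup>+ y. indicator ?E (x(i := y)) \<partial>M) = (\<integral>\<^sup>+ y. indicator {x j} y \<partial>M)"
    proof (rule nn_integral_cong)
      fix y
      have "x(i := y) \<in> space ?P"
        using x sp Ii by (auto simp: space_PiM PiE_def extensional_def)
      then show "indicator ?E (x(i := y)) = (indicator {x j} y :: ennreal)"
        using I by (auto simp: indicator_def)
    qed
    also have "\<dots> = 0" using single sM by simp
    finally show "(\<integral>\<^sup>+ y. indicator ?E (x(i := y)) \<partial>M) = 0" .
  qed
  also have "\<dots> = 0" by simp
  finally have "emeasure ?P ?E = 0" .
  then show ?thesis using Es by (subst AE_iff_measurable[of ?E]) auto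
qed

lemma measurable_PiM_permute:
  assumes "\<sigma> permutes I"
  shows "(\<lambda>p. p \<circ> \<sigma>) \<in> PiM I (\<lambda>_. M) \<rightarrow>\<^sub>M PiM I (\<lambda>_. M)"
proof -
  have "(\<lambda>p. restrict (p \<circ> \<sigma>) I) \<in> PiM I (\<lambda>_. M) \<rightarrow>\<^sub>M PiM I (\<lambda>_. M)"
    using permutes_in_image[OF assms]
    by (intro measurable_restrict measurable_component_singleton) auto
  moreover have "restrict (p \<circ> \<sigma>) I = p \<circ> \<sigma>" if "p \<in> space (PiM I (\<lambda>_. M))" for p
    using that permutes_not_in[OF assms]
    by (auto simp: space_PiM PiE_def extensional_def restrict_def fun_eq_iff)
  ultimately show ?thesis
    by (simp cong: measurable_cong)
qed

lemma distr_PiM_permute: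
  assumes "prob_space M" "\<sigma> permutes I"
  shows "distr (PiM I (\<lambda>_. M)) (PiM I (\<lambda>_. M)) (\<lambda>p. p \<circ> \<sigma>) = PiM I (\<lambda>_. M)"
proof -
  have "distr (PiM I (\<lambda>_. M)) (PiM I (\<lambda>_. M)) (\<lambda>p. p \<circ> \<sigma>)
      = distr (PiM I (\<lambda>_. M)) (PiM I (\<lambda>_. M)) (\<lambda>p. \<lambda>n\<in>I. p (\<sigma> n))"
    using permutes_not_in[OF assms(2)]
    by (intro distr_cong) (auto simp: space_PiM PiE_def extensional_def fun_eq_iff)
  also have "\<dots> = PiM I (\<lambda>_. M)"
    using assms permutes_inj_on[OF assms(2)] permutes_in_image[OF assms(2)]
    by (intro distr_PiM_reindex) auto
  finally show ?thesis .
qed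

lemma integral_PiM_permute:
  fixes h :: "('i \<Rightarrow> 'a) \<Rightarrow> real"
  assumes "prob_space M" "\<sigma> permutes I" "h \<in> borel_measurable (PiM I (\<lambda>_. M))"
  shows "(\<integral>p. h (p \<circ> \<sigma>) \<partial>PiM I (\<lambda>_. M)) = integral\<^sup>L (PiM I (\<lambda>_. M)) h"
  using integral_distr[OF measurable_PiM_permute[OF assms(2)] assms(3)]
  by (simp add: distr_PiM_permute[OF assms(1,2)])

section \<open>The p-value model\<close>

definition unif01 :: "real measure" where
  "unif01 = density lborel (indicator {0..1})"

lemma sets_unif01 [simp, measurable_cong]: "sets unif01 = sets borel"
  by (simp add: unif01_def)

lemma space_unif01 [simp]: "space unif01 = UNIV"
  by (simp add: unif01_def)

lemma prob_space_unif01: "prob_space unif01"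
  by (rule prob_spaceI) (simp add: unif01_def emeasure_density)

lemma emeasure_unif01_singleton: "emeasure unif01 {a} = 0"
proof -
  have "emeasure unif01 {a} = (\<integral>\<^sup>+ x. indicator {0..1} x * indicator {a} x \<partial>lborel)"
    unfolding unif01_def by (subst emeasure_density) auto
  also have "\<dots> \<le> (\<integral>\<^sup>+ x. indicator {a} x \<partial>lborel)"
    by (intro nn_integral_mono) (auto simp: indicator_def)
  finally show ?thesis by simp
qed

lemma AE_PiM_unif01_inj: "AE p in PiM {..<m::nat} (\<lambda>_. unif01). inj_on p {..<m}"
proof -
  have "AE p in PiM {..<m} (\<lambda>_. unif01). \<forall>i\<in>{..<m}. \<forall>j\<in>{..<m}. i \<noteq> j \<longrightarrow> p i \<noteq> p j"
  proof (intro AE_finite_allI finite_lessThan)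
    fix i j assume ij: "i \<in> {..<m}" "j \<in> {..<m}"
    show "AE p in PiM {..<m} (\<lambda>_. unif01). i \<noteq> j \<longrightarrow> p i \<noteq> p j"
    proof (cases "i = j")
      case False
      with ij show ?thesis
        by (simp add: AE_PiM_component_neq[OF prob_space_unif01 space_unif01 sets_unif01
            emeasure_unif01_singleton])
    qed simp
  qed
  then show ?thesis
    by eventually_elim (auto simp: inj_on_def)
qed

lemma AE_unif01_in_01: "AE x in unif01. x \<in> {0..1}"
  unfolding unif01_def by (subst AE_density) (auto simp: indicator_def)

lemma AE_PiM_unif01_in_01: "finite I \<Longrightarrow> AE p in PiM I (\<lambda>_. unif01). \<forall>i\<in>I. p i \<in> {0..1}"
  by (intro AE_finite_allI AE_PiM_component prob_space_unif01 AE_unif01_in_01)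

text \<open>\<open>f\<close> is only known on \<open>[0,1]\<close>; cutting it off outside makes it Borel measurable.\<close>

definition density01 :: "(real \<Rightarrow> real) \<Rightarrow> real \<Rightarrow> real" where
  "density01 f x = indicator {0..1} x * f x"

lemma borel_measurable_density01:
  "continuous_on {0..1} f \<Longrightarrow> density01 f \<in> borel_measurable borel"
  using borel_measurable_continuous_on_indicator[of "{0..1}" f]
  by (simp add: density01_def[abs_def])

lemma density01_nonneg: "\<forall>x\<in>{0..1}. 0 \<le> f x \<Longrightarrow> 0 \<le> density01 f x"
  by (simp add: density01_def indicator_def)

lemma density01_le:
  assumes "\<forall>x\<in>{0..1}. 0 \<le> f x" "\<forall>x y. 0 \<le> x \<longrightarrow> x \<le> y \<longrightarrow> y \<le> 1 \<longrightarrow> f y \<le> f x"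
  shows "density01 f x \<le> f 0"
  using assms by (auto simp: density01_def indicator_def)

lemma sets_pvals_law: "sets (pvals_law m N f) = sets (PiM {..<m} (\<lambda>_. unif01))"
  unfolding pvals_law_def by (intro sets_PiM_cong) (simp_all add: pval_law_def)

lemma pval_law_eq_density:
  assumes "continuous_on {0..1} f"
  shows "pval_law N f i = density unif01 (\<lambda>x. if i \<in> N then 1 else ennreal (density01 f x))"
proof (cases "i \<in> N")
  case False
  note borel_measurable_density01[OF assms, measurable]
  have "density unif01 (\<lambda>x. ennreal (density01 f x))
      = density lborel (\<lambda>x. indicator {0..1} x * ennreal (density01 f x))"
    unfolding unif01_def by (rule density_density_eq) auto
  also have "(\<lambda>x. indicator {0..1} x * ennreal (density01 f x)) = (\<lambda>x. ennreal (f x) * indicator {0..1} x)"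
    by (auto simp: density01_def indicator_def)
  finally show ?thesis using False by (simp add: pval_law_def)
qed (simp add: pval_law_def unif01_def density_1)

lemma prob_space_pval_law:
  assumes "continuous_on {0..1} f"
    and "(\<integral>\<^sup>+ x. ennreal (f x) * indicator {0..1} x \<partial>lborel) = 1"
  shows "prob_space (pval_law N f i)"
proof (cases "i \<in> N")
  case False
  note borel_measurable_density01[OF assms(1), measurable]
  show ?thesis
  proof (rule prob_spaceI)
    have "emeasure (pval_law N f i) (space (pval_law N f i)) = (\<integral>\<^sup>+ x. ennreal (density01 f x) \<partial>unif01)"
      using False by (simp add: pval_law_eq_density[OF assms(1)] emeasure_density)
    also have "\<dots> = (\<integral>\<^sup>+ x. indicator {0..1} x * ennreal (density01 f x) \<partial>lborel)"
      unfolding unif01_def by (rule nn_integral_density) auto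
    also have "\<dots> = (\<integral>\<^sup>+ x. ennreal (f x) * indicator {0..1} x \<partial>lborel)"
      by (intro nn_integral_cong) (auto simp: density01_def indicator_def)
    finally show "emeasure (pval_law N f i) (space (pval_law N f i)) = 1"
      using assms(2) by simp
  qed
qed (simp add: pval_law_def prob_space_unif01[unfolded unif01_def])

definition likelihood_ratio :: "nat \<Rightarrow> nat set \<Rightarrow> (real \<Rightarrow> real) \<Rightarrow> (nat \<Rightarrow> real) \<Rightarrow> real" where
  "likelihood_ratio m N f p = (\<Prod>i\<in>{..<m} - N. density01 f (p i))"

lemma borel_measurable_likelihood_ratio:
  assumes "continuous_on {0..1} f"
  shows "likelihood_ratio m N f \<in> borel_measurable (PiM {..<m} (\<lambda>_. unif01))"
proof -
  note borel_measurable_density01[OF assms, measurable]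
  show ?thesis
    unfolding likelihood_ratio_def[abs_def] by measurable
qed

lemma pvals_law_eq_density:
  assumes f_nonneg: "\<forall>x\<in>{0..1}. 0 \<le> f x" and f_cont: "continuous_on {0..1} f"
    and f_density: "(\<integral>\<^sup>+ x. ennreal (f x) * indicator {0..1} x \<partial>lborel) = 1"
  shows "pvals_law m N f = density (PiM {..<m} (\<lambda>_. unif01)) (\<lambda>p. ennreal (likelihood_ratio m N f p))"
proof -
  define G where "G i x = (if i \<in> N then 1 else ennreal (density01 f x))" for i x
  note borel_measurable_density01[OF f_cont, measurable]
  have G_meas: "G i \<in> borel_measurable unif01" for i
    unfolding G_def by measurable
  have G_law: "pval_law N f i = density unif01 (G i)" for i
    unfolding G_def by (rule pval_law_eq_density[OF f_cont])
  have "pvals_law m N f = PiM {..<m} (\<lambda>i. density unif01 (G i))"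
    unfolding pvals_law_def G_law ..
  also have "\<dots> = density (PiM {..<m} (\<lambda>_. unif01)) (\<lambda>p. \<Prod>i<m. G i (p i))"
    using prob_space_pval_law[OF f_cont f_density, of N] unfolding G_law
    by (intro PiM_density prob_space_unif01 G_meas finite_lessThan)
  also have "(\<lambda>p. \<Prod>i<m. G i (p i)) = (\<lambda>p. ennreal (likelihood_ratio m N f p))"
  proof
    fix p :: "nat \<Rightarrow> real"
    have "(\<Prod>i<m. G i (p i)) = (\<Prod>i\<in>{..<m} - N. ennreal (density01 f (p i)))"
      unfolding G_def by (simp add: prod.If_cases Diff_eq)
    also have "\<dots> = ennreal (likelihood_ratio m N f p)"
      unfolding likelihood_ratio_def using density01_nonneg[OF f_nonneg] by (intro prod_ennreal) auto
    finally show "(\<Prod>i<m. G i (p i)) = ennreal (likelihood_ratio m N f p)" .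
  qed
  finally show ?thesis .
qed

section \<open>Symmetrization of the FDR\<close>

lemma FDP_bounds:
  assumes "finite N"
  shows "0 \<le> FDP m N R p" "FDP m N R p \<le> card N"
proof -
  have "FDP m N R p \<le> real (num_false_rej m N R p) / 1"
    unfolding FDP_def by (intro divide_left_mono) auto
  also have "\<dots> \<le> card N"
    unfolding num_false_rej_def using assms by (simp add: card_mono)
  finally show "FDP m N R p \<le> card N" .
qed (simp add: FDP_def)

lemma real_pval_rank: "real (pval_rank m p i) = (\<Sum>j<m. of_bool (p j < p i))"
  by (simp add: pval_rank_def Int_def)

lemma borel_measurable_FDP:
  assumes "threshold_procedure m R" "N \<subseteq> {..<m}"
    and R_meas: "R \<in> PiM {..<m} (\<lambda>_. unif01) \<rightarrow>\<^sub>M count_space UNIV"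
  shows "FDP m N R \<in> borel_measurable (PiM {..<m} (\<lambda>_. unif01))"
proof -
  let ?P = "PiM {..<m} (\<lambda>_. unif01)"
  have comp_meas: "(\<lambda>p. p j) \<in> borel_measurable ?P" if "j < m" for j
    using that measurable_component_singleton[of j "{..<m}" "\<lambda>_. unif01"]
      measurable_cong_sets[OF refl sets_unif01] by auto
  have R_real: "(\<lambda>p. real (R p)) \<in> borel_measurable ?P" "(\<lambda>p. real (max (R p) 1)) \<in> borel_measurable ?P"
    by (intro measurable_compose[OF R_meas]; simp)+
  have rank_meas: "(\<lambda>p. real (pval_rank m p i)) \<in> borel_measurable ?P" if "i < m" for i
    unfolding real_pval_rank using that comp_meas
    by (intro borel_measurable_sum measurable_compose[OF _ measurable_of_bool]
        borel_measurable_pred_less) auto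
  have "real (card {i\<in>N. pval_rank m p i < R p})
      = (\<Sum>i\<in>N. of_bool (real (pval_rank m p i) < real (R p)))" for p
    using finite_subset[OF assms(2)] by (simp add: Int_def)
  then have "FDP m N R = (\<lambda>p. (\<Sum>i\<in>N. of_bool (real (pval_rank m p i) < real (R p))) / real (max (R p) 1))"
    by (intro ext) (simp only: FDP_eq_pval_rank[OF assms(1,2)])
  also have "\<dots> \<in> borel_measurable ?P"
    using assms(2) rank_meas R_real
    by (intro borel_measurable_divide borel_measurable_sum measurable_compose[OF _ measurable_of_bool]
        borel_measurable_pred_less) auto
  finally show ?thesis .
qed

lemma likelihood_ratio_bounds:
  assumes "\<forall>x\<in>{0..1}. 0 \<le> f x" "\<forall>x y. 0 \<le> x \<longrightarrow> x \<le> y \<longrightarrow> y \<le> 1 \<longrightarrow> f y \<le> f x"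
  shows "0 \<le> likelihood_ratio m N f p" "likelihood_ratio m N f p \<le> max 1 (f 0) ^ m"
proof -
  show "0 \<le> likelihood_ratio m N f p"
    unfolding likelihood_ratio_def using density01_nonneg[OF assms(1)] by (intro prod_nonneg) auto
  have "likelihood_ratio m N f p \<le> (\<Prod>i\<in>{..<m} - N. max 1 (f 0))"
    unfolding likelihood_ratio_def using density01_nonneg[OF assms(1)] density01_le[OF assms]
    by (intro prod_mono) (auto intro: order_trans[OF _ max.cobounded2])
  also have "\<dots> \<le> max 1 (f 0) ^ m"
    by (auto intro: power_increasing card_mono order_trans[OF card_mono card_lessThan[THEN eq_imp_le]])
  finally show "likelihood_ratio m N f p \<le> max 1 (f 0) ^ m" .
qed

definition perm_avg_FDP ::
    "nat \<Rightarrow> nat set \<Rightarrow> (real \<Rightarrow> real) \<Rightarrow> ((nat \<Rightarrow> real) \<Rightarrow> nat) \<Rightarrow> (nat \<Rightarrow> real) \<Rightarrow> real" where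
  "perm_avg_FDP m N f R p =
     (\<Sum>\<sigma> | \<sigma> permutes {..<m}. likelihood_ratio m N f (p \<circ> \<sigma>) * FDP m N R (p \<circ> \<sigma>)) / fact m"

lemma integrable_weighted_FDP_permute:
  assumes N: "N \<subseteq> {..<m}"
    and f_nonneg: "\<forall>x\<in>{0..1}. 0 \<le> f x"
    and f_mono: "\<forall>x y. 0 \<le> x \<longrightarrow> x \<le> y \<longrightarrow> y \<le> 1 \<longrightarrow> f y \<le> f x"
    and f_cont: "continuous_on {0..1} f"
    and R: "threshold_procedure m R" "R \<in> PiM {..<m} (\<lambda>_. unif01) \<rightarrow>\<^sub>M count_space UNIV"
    and \<sigma>: "\<sigma> permutes {..<m}"
  shows "integrable (PiM {..<m} (\<lambda>_. unif01))
           (\<lambda>p. likelihood_ratio m N f (p \<circ> \<sigma>) * FDP m N R (p \<circ> \<sigma>))"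
proof (rule finite_measure.integrable_const_bound[where B = "max 1 (f 0) ^ m * card N"])
  show "finite_measure (PiM {..<m} (\<lambda>_. unif01))"
    by (intro prob_space.finite_measure prob_space_PiM prob_space_unif01)
  have "\<bar>likelihood_ratio m N f q * FDP m N R q\<bar> \<le> max 1 (f 0) ^ m * card N" for q
    using likelihood_ratio_bounds[OF f_nonneg f_mono] FDP_bounds[OF finite_subset[OF N]]
    by (auto simp: abs_mult intro!: mult_mono)
  then show "AE p in PiM {..<m} (\<lambda>_. unif01).
      norm (likelihood_ratio m N f (p \<circ> \<sigma>) * FDP m N R (p \<circ> \<sigma>)) \<le> max 1 (f 0) ^ m * card N"
    by simp
  show "(\<lambda>p. likelihood_ratio m N f (p \<circ> \<sigma>) * FDP m N R (p \<circ> \<sigma>))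
      \<in> borel_measurable (PiM {..<m} (\<lambda>_. unif01))"
    using borel_measurable_likelihood_ratio[OF f_cont] borel_measurable_FDP[OF R(1) N R(2)]
    by (intro borel_measurable_times measurable_compose[OF measurable_PiM_permute[OF \<sigma>]])
qed

lemma integrable_perm_avg_FDP:
  assumes "N \<subseteq> {..<m}" "\<forall>x\<in>{0..1}. 0 \<le> f x"
    "\<forall>x y. 0 \<le> x \<longrightarrow> x \<le> y \<longrightarrow> y \<le> 1 \<longrightarrow> f y \<le> f x" "continuous_on {0..1} f"
    "threshold_procedure m R" "R \<in> PiM {..<m} (\<lambda>_. unif01) \<rightarrow>\<^sub>M count_space UNIV"
  shows "integrable (PiM {..<m} (\<lambda>_. unif01)) (perm_avg_FDP m N f R)"
  unfolding perm_avg_FDP_def[abs_def]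
  using integrable_weighted_FDP_permute[OF assms] by (intro integrable_divide_zero integrable_sum) auto

lemma FDR_eq_integral_perm_avg_FDP:
  assumes N: "N \<subseteq> {..<m}"
    and f_nonneg: "\<forall>x\<in>{0..1}. 0 \<le> f x"
    and f_mono: "\<forall>x y. 0 \<le> x \<longrightarrow> x \<le> y \<longrightarrow> y \<le> 1 \<longrightarrow> f y \<le> f x"
    and f_cont: "continuous_on {0..1} f"
    and f_density: "(\<integral>\<^sup>+ x. ennreal (f x) * indicator {0..1} x \<partial>lborel) = 1"
    and R: "threshold_procedure m R" "R \<in> PiM {..<m} (\<lambda>_. unif01) \<rightarrow>\<^sub>M count_space UNIV"
  shows "FDR m N f R = (\<integral>p. perm_avg_FDP m N f R p \<partial>PiM {..<m} (\<lambda>_. unif01))"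
proof -
  let ?P = "PiM {..<m} (\<lambda>_. unif01)"
  let ?S = "{\<sigma>. \<sigma> permutes {..<m}}"
  let ?H = "\<lambda>p. likelihood_ratio m N f p * FDP m N R p"
  have H_meas: "?H \<in> borel_measurable ?P"
    using borel_measurable_likelihood_ratio[OF f_cont] borel_measurable_FDP[OF R(1) N R(2)] by simp
  have "FDR m N f R = integral\<^sup>L ?P ?H"
    unfolding FDR_def pvals_law_eq_density[OF f_nonneg f_cont f_density]
    using borel_measurable_likelihood_ratio[OF f_cont] borel_measurable_FDP[OF R(1) N R(2)]
      likelihood_ratio_bounds(1)[OF f_nonneg f_mono]
    by (subst integral_density) auto
  \<comment> \<open>the uniform product measure is invariant under relabelling the hypotheses\<close>
  also have "\<dots> = (\<Sum>\<sigma>\<in>?S. \<integral>p. ?H (p \<circ> \<sigma>) \<partial>?P) / fact m"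
    using integral_PiM_permute[OF prob_space_unif01 _ H_meas] card_permutations[of "{..<m}" m]
    by simp
  also have "\<dots> = (\<integral>p. perm_avg_FDP m N f R p \<partial>?P)"
    unfolding perm_avg_FDP_def
    using integrable_weighted_FDP_permute[OF N f_nonneg f_mono f_cont R] by (simp add: integral_sum)
  finally show ?thesis .
qed

lemma perm_avg_FDP_mono:
  assumes N: "N \<subseteq> {..<m}"
    and f_nonneg: "\<forall>x\<in>{0..1}. 0 \<le> f x"
    and f_mono: "\<forall>x y. 0 \<le> x \<longrightarrow> x \<le> y \<longrightarrow> y \<le> 1 \<longrightarrow> f y \<le> f x"
    and R1: "threshold_procedure m R1" and R2: "threshold_procedure m R2" and "R1 p \<le> R2 p"
    and p_inj: "inj_on p {..<m}" and p_01: "\<forall>i\<in>{..<m}. p i \<in> {0..1}"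
  shows "perm_avg_FDP m N f R1 p \<le> perm_avg_FDP m N f R2 p"
proof -
  have FDP_permute: "FDP m N R (p \<circ> \<sigma>) = card {i\<in>N. pval_rank m (p \<circ> \<sigma>) i < R p} / real (max (R p) 1)"
    if "threshold_procedure m R" "\<sigma> permutes {..<m}" for R \<sigma>
    using FDP_eq_pval_rank[OF that(1) N] threshold_procedure_permute[OF that] by simp
  have "R2 p \<le> m" using R2 unfolding threshold_procedure_def by blast
  have "(\<Sum>\<sigma> | \<sigma> permutes {..<m}. likelihood_ratio m N f (p \<circ> \<sigma>) * FDP m N R1 (p \<circ> \<sigma>))
      \<le> (\<Sum>\<sigma> | \<sigma> permutes {..<m}. likelihood_ratio m N f (p \<circ> \<sigma>) * FDP m N R2 (p \<circ> \<sigma>))"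
  proof -
    have "0 \<le> density01 f (p i)" for i
      using density01_nonneg[OF f_nonneg] .
    moreover have "density01 f (p j) \<le> density01 f (p i)" if "i < m" "j < m" "p i \<le> p j" for i j
      using that p_01 f_mono by (auto simp: density01_def)
    ultimately show ?thesis
      using sum_permutes_pval_null_fraction_mono[OF N p_inj, of "density01 f" "R1 p" "R2 p"]
        \<open>R1 p \<le> R2 p\<close> \<open>R2 p \<le> m\<close>
      by (simp add: FDP_permute[OF R1] FDP_permute[OF R2] likelihood_ratio_def)
  qed
  then show ?thesis
    unfolding perm_avg_FDP_def by (simp add: divide_right_mono)
qed

theorem theorem2:
  fixes m :: nat and N :: "nat set" and f :: "real \<Rightarrow> real"
    and R1 R2 :: "(nat \<Rightarrow> real) \<Rightarrow> nat"
  assumes N: "N \<subseteq> {..<m}"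
    and f_nonneg: "\<forall>x\<in>{0..1}. 0 \<le> f x"
    and f_density: "(\<integral>\<^sup>+ x. ennreal (f x) * indicator {0..1} x \<partial>lborel) = 1"
    and f_mono: "\<forall>x y. 0 \<le> x \<longrightarrow> x \<le> y \<longrightarrow> y \<le> 1 \<longrightarrow> f y \<le> f x"
    and f_diff: "f differentiable_on {0..1}"
    and B1: "threshold_procedure m R1"
    and B2: "threshold_procedure m R2"
    and R1_meas: "R1 \<in> pvals_law m N f \<rightarrow>\<^sub>M count_space UNIV"
    and R2_meas: "R2 \<in> pvals_law m N f \<rightarrow>\<^sub>M count_space UNIV"
    and R_le: "\<forall>p. R1 p \<le> R2 p"
  shows "FDR m N f R1 \<le> FDR m N f R2"
proof -
  let ?P = "PiM {..<m} (\<lambda>_. unif01)"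
  \<comment> \<open>differentiability of \<open>f\<close> is only used to make it measurable\<close>
  have f_cont: "continuous_on {0..1} f"
    using f_diff by (rule differentiable_imp_continuous_on)
  have R1_meas': "R1 \<in> ?P \<rightarrow>\<^sub>M count_space UNIV" and R2_meas': "R2 \<in> ?P \<rightarrow>\<^sub>M count_space UNIV"
    using R1_meas R2_meas by (simp_all add: measurable_cong_sets[OF sets_pvals_law refl])
  note FDR_eq = FDR_eq_integral_perm_avg_FDP[OF N f_nonneg f_mono f_cont f_density]
  note integrable = integrable_perm_avg_FDP[OF N f_nonneg f_mono f_cont]
  have "AE p in ?P. perm_avg_FDP m N f R1 p \<le> perm_avg_FDP m N f R2 p"
    using AE_PiM_unif01_inj[of m] AE_PiM_unif01_in_01[OF finite_lessThan[of m]]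
    by eventually_elim (rule perm_avg_FDP_mono[OF N f_nonneg f_mono B1 B2 R_le[rule_format]])
  have "FDR m N f R1 = (\<integral>p. perm_avg_FDP m N f R1 p \<partial>?P)"
    by (rule FDR_eq[OF B1 R1_meas'])
  also have "\<dots> \<le> (\<integral>p. perm_avg_FDP m N f R2 p \<partial>?P)"
    by (intro integral_mono_AE integrable[OF B1 R1_meas'] integrable[OF B2 R2_meas'] \<open>AE p in ?P. _\<close>)
  also have "\<dots> = FDR m N f R2"
    by (rule FDR_eq[OF B2 R2_meas', symmetric])
  finally show ?thesis .
qed

end
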